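(* Under the hypotheses of the Existence and Uniqueness lemma ($\mu\in\mathcal P_2(\mathbb R^d)$, $\phi^{\#}_\mu$ Fréchet differentiable, $\lambda$-convex and bounded below on $L^2(\mathbb R^d;\mu)$, $\tau>0$ with $\lambda/2+1/\tau>0$, $v\in L^2(\mathbb R^d;\mu)$), and assuming additionally $|\lambda|\tau<1$ when $\lambda<0$, the unique minimizer $\xi^*$ of $\Phi_{\tau,\mu,v}$ satisfies \[\|\nabla\phi^{\#}_\mu(\xi^* )\|^2_{L^2(\mathbb R^d;\mu)}\le\mathcal C(\lambda,\tau)\,\|\nabla\phi^{\#}_\mu(v)\|^2_{L^2(\mathbb R^d;\mu)},\qquad\mathcal C(\lambda,\tau):=\begin{cases}1,&\lambda\ge0,\\ e^{2|\lambda_\tau|\tau}=\frac{1-\lambda\tau}{1+\lambda\tau},&\lambda<0.\end{cases}\]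
   Context: $\lambda_\tau:=\frac1{2\tau}\log\frac{1+\lambda\tau}{1-\lambda\tau}$. $\phi^{\#}_\mu(\xi):=\phi(\xi_{\#}\mu)$ is the lift on $L^2(\mathbb R^d;\mu)$ (Hilbert space of $\mu$-square-integrable maps $\mathbb R^d\to\mathbb R^d$) with Fréchet gradient $\nabla\phi^{\#}_\mu$; $\lambda$-convexity: $F((1-t)\xi_1+t\xi_2)\le(1-t)F(\xi_1)+tF(\xi_2)-\frac\lambda2t(1-t)\|\xi_1-\xi_2\|^2$. $\Phi_{\tau,\mu,v}(\xi)=\tfrac12\big(\phi^{\#}_\mu(\xi)+\langle\nabla\phi^{\#}_\mu(v),\xi\rangle_{L^2(\mu)}\big)+\tfrac1{2\tau}\|\xi-v\|^2_{L^2(\mu)}$. *)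

theory Defs
  imports "HOL-Probability.Probability"
begin

text \<open>R^d is modelled by an arbitrary Euclidean space 'a. Elements of
L^2(R^d; mu) are represented by mu-measurable maps 'a => 'a with integrable
squared norm (a.e.-equal maps are not identified; all notions below respect
a.e.-equality).\<close>

definition P2 :: "'a::euclidean_space measure \<Rightarrow> bool" where
  "P2 \<mu> \<longleftrightarrow> prob_space \<mu> \<and> sets \<mu> = sets borel \<and> integrable \<mu> (\<lambda>x. (norm x)\<^sup>2)"

definition L2 :: "'a::euclidean_space measure \<Rightarrow> ('a \<Rightarrow> 'a) set" where
  "L2 \<mu> = {\<xi>. \<xi> \<in> borel_measurable \<mu> \<and> integrable \<mu> (\<lambda>x. (norm (\<xi> x))\<^sup>2)}"

definition l2_inner :: "'a::euclidean_space measure \<Rightarrow> ('a \<Rightarrow> 'a) \<Rightarrow> ('a \<Rightarrow> 'a) \<Rightarrow> real" where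
  "l2_inner \<mu> f g = (\<integral>x. inner (f x) (g x) \<partial>\<mu>)"

definition l2_norm :: "'a::euclidean_space measure \<Rightarrow> ('a \<Rightarrow> 'a) \<Rightarrow> real" where
  "l2_norm \<mu> f = sqrt (l2_inner \<mu> f f)"

definition lift :: "('a::euclidean_space measure \<Rightarrow> real) \<Rightarrow> 'a measure \<Rightarrow> ('a \<Rightarrow> 'a) \<Rightarrow> real" where
  "lift \<phi> \<mu> \<xi> = \<phi> (distr \<mu> borel \<xi>)"

definition has_L2_gradient ::
  "(('a::euclidean_space \<Rightarrow> 'a) \<Rightarrow> real) \<Rightarrow> 'a measure \<Rightarrow> ('a \<Rightarrow> 'a) \<Rightarrow> ('a \<Rightarrow> 'a) \<Rightarrow> bool" where
  "has_L2_gradient F \<mu> \<xi> g \<longleftrightarrow> g \<in> L2 \<mu> \<and>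
     (\<forall>\<epsilon>>0. \<exists>\<delta>>0. \<forall>h\<in>L2 \<mu>. l2_norm \<mu> h < \<delta> \<longrightarrow>
        \<bar>F (\<lambda>x. \<xi> x + h x) - F \<xi> - l2_inner \<mu> g h\<bar> \<le> \<epsilon> * l2_norm \<mu> h)"

definition L2_frechet_differentiable :: "(('a::euclidean_space \<Rightarrow> 'a) \<Rightarrow> real) \<Rightarrow> 'a measure \<Rightarrow> bool" where
  "L2_frechet_differentiable F \<mu> \<longleftrightarrow> (\<forall>\<xi>\<in>L2 \<mu>. \<exists>g. has_L2_gradient F \<mu> \<xi> g)"

definition L2_grad :: "(('a::euclidean_space \<Rightarrow> 'a) \<Rightarrow> real) \<Rightarrow> 'a measure \<Rightarrow> ('a \<Rightarrow> 'a) \<Rightarrow> ('a \<Rightarrow> 'a)" where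
  "L2_grad F \<mu> \<xi> = (SOME g. has_L2_gradient F \<mu> \<xi> g)"

definition L2_lambda_convex :: "real \<Rightarrow> (('a::euclidean_space \<Rightarrow> 'a) \<Rightarrow> real) \<Rightarrow> 'a measure \<Rightarrow> bool" where
  "L2_lambda_convex lam F \<mu> \<longleftrightarrow> (\<forall>\<xi>1\<in>L2 \<mu>. \<forall>\<xi>2\<in>L2 \<mu>. \<forall>t\<in>{0..1}.
     F (\<lambda>x. (1 - t) *\<^sub>R \<xi>1 x + t *\<^sub>R \<xi>2 x)
       \<le> (1 - t) * F \<xi>1 + t * F \<xi>2 - lam / 2 * t * (1 - t) * (l2_norm \<mu> (\<lambda>x. \<xi>1 x - \<xi>2 x))\<^sup>2)"

definition L2_bounded_below :: "(('a::euclidean_space \<Rightarrow> 'a) \<Rightarrow> real) \<Rightarrow> 'a measure \<Rightarrow> bool" where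
  "L2_bounded_below F \<mu> \<longleftrightarrow> (\<exists>c. \<forall>\<xi>\<in>L2 \<mu>. c \<le> F \<xi>)"

definition Phi :: "('a::euclidean_space measure \<Rightarrow> real) \<Rightarrow> real \<Rightarrow> 'a measure \<Rightarrow> ('a \<Rightarrow> 'a) \<Rightarrow> ('a \<Rightarrow> 'a) \<Rightarrow> real" where
  "Phi \<phi> \<tau> \<mu> v \<xi> = 1/2 * (lift \<phi> \<mu> \<xi> + l2_inner \<mu> (L2_grad (lift \<phi> \<mu>) \<mu> v) \<xi>)
      + 1 / (2 * \<tau>) * (l2_norm \<mu> (\<lambda>x. \<xi> x - v x))\<^sup>2"

definition lambda_tau :: "real \<Rightarrow> real \<Rightarrow> real" where
  "lambda_tau lam \<tau> = 1 / (2 * \<tau>) * ln ((1 + lam * \<tau>) / (1 - lam * \<tau>))"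

definition C_const :: "real \<Rightarrow> real \<Rightarrow> real" where
  "C_const lam \<tau> = (if lam \<ge> 0 then 1 else exp (2 * \<bar>lambda_tau lam \<tau>\<bar> * \<tau>))"

end

theory Submission
  imports Defs
begin

(* Write a and b for the gradients of the lift at the minimiser xi* and at v.  Differentiating
   Phi along lines through its minimiser gives the Euler-Lagrange equation
   xi* - v = -(tau/2) (a + b), weakly in L^2(mu): a trapezoidal step for the gradient flow.
   Lambda-convexity makes the gradient lambda-monotone, <a - b, xi* - v> >= lambda |xi* - v|^2.
   Inserting the first identity into the second gives
   |b|^2 - |a|^2 >= (lambda tau / 2) |a + b|^2,  which is nonnegative for lambda >= 0,
   and for lambda < 0 the bound |a + b|^2 <= 2 |a|^2 + 2 |b|^2 turns it into
   (1 + lambda tau) |a|^2 <= (1 - lambda tau) |b|^2. *)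

lemma integrable_inner_L2:
  assumes "f \<in> L2 \<mu>" "g \<in> L2 \<mu>"
  shows "integrable \<mu> (\<lambda>x. inner (f x) (g x))"
proof (rule Bochner_Integration.integrable_bound)
  show "integrable \<mu> (\<lambda>x. (norm (f x))\<^sup>2 + (norm (g x))\<^sup>2)"
    using assms unfolding L2_def by auto
  show "(\<lambda>x. inner (f x) (g x)) \<in> borel_measurable \<mu>"
    using assms unfolding L2_def by auto
  have "\<bar>inner (f x) (g x)\<bar> \<le> (norm (f x))\<^sup>2 + (norm (g x))\<^sup>2" for x
    using Cauchy_Schwarz_ineq2[of "f x" "g x"] sum_squares_bound[of "norm (f x)" "norm (g x)"]
      mult_nonneg_nonneg[of "norm (f x)" "norm (g x)"] by linarith
  then show "AE x in \<mu>. norm (inner (f x) (g x)) \<le> norm ((norm (f x))\<^sup>2 + (norm (g x))\<^sup>2)"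
    by simp
qed

lemma L2_scaleR: "f \<in> L2 \<mu> \<Longrightarrow> (\<lambda>x. c *\<^sub>R f x) \<in> L2 \<mu>"
  by (auto simp: L2_def power_mult_distrib)

lemma L2_add:
  assumes "f \<in> L2 \<mu>" "g \<in> L2 \<mu>"
  shows "(\<lambda>x. f x + g x) \<in> L2 \<mu>"
proof -
  have "(\<lambda>x. (norm (f x + g x))\<^sup>2) = (\<lambda>x. inner (f x) (f x) + 2 * inner (f x) (g x) + inner (g x) (g x))"
    by (simp only: power2_norm_eq_inner) (simp add: inner_add_left inner_add_right inner_commute add_ac)
  moreover have "integrable \<mu> (\<lambda>x. inner (f x) (f x) + 2 * inner (f x) (g x) + inner (g x) (g x))"
    using integrable_inner_L2[OF assms(1) assms(1)] integrable_inner_L2[OF assms(1) assms(2)]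
      integrable_inner_L2[OF assms(2) assms(2)] by auto
  ultimately show ?thesis
    using assms unfolding L2_def by auto
qed

lemma L2_diff:
  assumes "f \<in> L2 \<mu>" "g \<in> L2 \<mu>"
  shows "(\<lambda>x. f x - g x) \<in> L2 \<mu>"
  using L2_add[OF assms(1) L2_scaleR[OF assms(2), of "-1"]] by simp

lemma l2_inner_commute: "l2_inner \<mu> f g = l2_inner \<mu> g f"
  unfolding l2_inner_def by (simp add: inner_commute)

lemma l2_inner_scaleR_left [simp]: "l2_inner \<mu> (\<lambda>x. c *\<^sub>R f x) g = c * l2_inner \<mu> f g"
  unfolding l2_inner_def by simp

lemma l2_inner_scaleR_right [simp]: "l2_inner \<mu> f (\<lambda>x. c *\<^sub>R g x) = c * l2_inner \<mu> f g"
  unfolding l2_inner_def by simp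

lemma l2_inner_add_left:
  "f \<in> L2 \<mu> \<Longrightarrow> g \<in> L2 \<mu> \<Longrightarrow> h \<in> L2 \<mu> \<Longrightarrow>
    l2_inner \<mu> (\<lambda>x. f x + g x) h = l2_inner \<mu> f h + l2_inner \<mu> g h"
  unfolding l2_inner_def by (simp add: inner_add_left integrable_inner_L2)

lemma l2_inner_diff_left:
  "f \<in> L2 \<mu> \<Longrightarrow> g \<in> L2 \<mu> \<Longrightarrow> h \<in> L2 \<mu> \<Longrightarrow>
    l2_inner \<mu> (\<lambda>x. f x - g x) h = l2_inner \<mu> f h - l2_inner \<mu> g h"
  unfolding l2_inner_def by (simp add: inner_diff_left integrable_inner_L2)

lemma l2_inner_add_right:
  "f \<in> L2 \<mu> \<Longrightarrow> g \<in> L2 \<mu> \<Longrightarrow> h \<in> L2 \<mu> \<Longrightarrow>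
    l2_inner \<mu> h (\<lambda>x. f x + g x) = l2_inner \<mu> h f + l2_inner \<mu> h g"
  unfolding l2_inner_def by (simp add: inner_add_right integrable_inner_L2)

lemma l2_inner_diff_right:
  "f \<in> L2 \<mu> \<Longrightarrow> g \<in> L2 \<mu> \<Longrightarrow> h \<in> L2 \<mu> \<Longrightarrow>
    l2_inner \<mu> h (\<lambda>x. f x - g x) = l2_inner \<mu> h f - l2_inner \<mu> h g"
  unfolding l2_inner_def by (simp add: inner_diff_right integrable_inner_L2)

lemma l2_inner_self_nonneg: "0 \<le> l2_inner \<mu> f f"
  unfolding l2_inner_def by (rule integral_nonneg_AE) auto

lemma l2_norm_power2: "(l2_norm \<mu> f)\<^sup>2 = l2_inner \<mu> f f"
  unfolding l2_norm_def using l2_inner_self_nonneg by simp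

lemma l2_norm_nonneg: "0 \<le> l2_norm \<mu> f"
  unfolding l2_norm_def using l2_inner_self_nonneg by simp

lemma l2_norm_scaleR: "l2_norm \<mu> (\<lambda>x. c *\<^sub>R f x) = \<bar>c\<bar> * l2_norm \<mu> f"
  unfolding l2_norm_def by (simp add: real_sqrt_mult mult.assoc[symmetric])

lemma l2_norm_minus_commute: "l2_norm \<mu> (\<lambda>x. f x - g x) = l2_norm \<mu> (\<lambda>x. g x - f x)"
proof -
  have "inner (f x - g x) (f x - g x) = inner (g x - f x) (g x - f x)" for x
    by (metis power2_norm_eq_inner norm_minus_commute)
  then show ?thesis
    unfolding l2_norm_def l2_inner_def by simp
qed

lemma l2_norm_add_power2_le:
  assumes "f \<in> L2 \<mu>" "g \<in> L2 \<mu>"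
  shows "(l2_norm \<mu> (\<lambda>x. f x + g x))\<^sup>2 \<le> 2 * ((l2_norm \<mu> f)\<^sup>2 + (l2_norm \<mu> g)\<^sup>2)"
proof -
  have "inner (f x + g x) (f x + g x) \<le> 2 * inner (f x) (f x) + 2 * inner (g x) (g x)" for x
    using inner_ge_zero[of "f x - g x"]
    by (simp add: inner_add_left inner_add_right inner_diff_left inner_diff_right inner_commute)
  then have "l2_inner \<mu> (\<lambda>x. f x + g x) (\<lambda>x. f x + g x)
      \<le> (\<integral>x. 2 * inner (f x) (f x) + 2 * inner (g x) (g x) \<partial>\<mu>)"
    unfolding l2_inner_def using assms
    by (intro integral_mono) (simp_all add: integrable_inner_L2 L2_add)
  also have "\<dots> = 2 * (l2_inner \<mu> f f + l2_inner \<mu> g g)"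
    unfolding l2_inner_def using assms by (simp add: integrable_inner_L2)
  finally show ?thesis
    by (simp add: l2_norm_power2)
qed

lemma has_L2_gradient_in_L2: "has_L2_gradient F \<mu> \<xi> g \<Longrightarrow> g \<in> L2 \<mu>"
  by (simp add: has_L2_gradient_def)

lemma has_L2_gradient_L2_grad:
  "L2_frechet_differentiable F \<mu> \<Longrightarrow> \<xi> \<in> L2 \<mu> \<Longrightarrow> has_L2_gradient F \<mu> \<xi> (L2_grad F \<mu> \<xi>)"
  unfolding L2_frechet_differentiable_def L2_grad_def by (metis someI_ex)

lemma has_L2_gradient_along_line:
  assumes grad: "has_L2_gradient F \<mu> \<xi> g" and h: "h \<in> L2 \<mu>" and "\<epsilon> > 0"
  shows "\<exists>s>0. \<forall>t. \<bar>t\<bar> < s \<longrightarrow>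
    \<bar>F (\<lambda>x. \<xi> x + t *\<^sub>R h x) - F \<xi> - t * l2_inner \<mu> g h\<bar> \<le> \<epsilon> * \<bar>t\<bar>"
proof -
  define N where "N = l2_norm \<mu> h"
  have N: "0 \<le> N"
    unfolding N_def by (rule l2_norm_nonneg)
  then have "\<epsilon> / (N + 1) > 0"
    using \<open>\<epsilon> > 0\<close> by simp
  then obtain \<delta> where "\<delta> > 0" and \<delta>: "\<forall>k\<in>L2 \<mu>. l2_norm \<mu> k < \<delta> \<longrightarrow>
      \<bar>F (\<lambda>x. \<xi> x + k x) - F \<xi> - l2_inner \<mu> g k\<bar> \<le> \<epsilon> / (N + 1) * l2_norm \<mu> k"
    using grad unfolding has_L2_gradient_def by blast
  have "\<bar>F (\<lambda>x. \<xi> x + t *\<^sub>R h x) - F \<xi> - t * l2_inner \<mu> g h\<bar> \<le> \<epsilon> * \<bar>t\<bar>"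
    if t: "\<bar>t\<bar> < \<delta> / (N + 1)" for t
  proof -
    have norm_th: "l2_norm \<mu> (\<lambda>x. t *\<^sub>R h x) = \<bar>t\<bar> * N"
      unfolding N_def by (rule l2_norm_scaleR)
    have "\<bar>t\<bar> * N \<le> \<bar>t\<bar> * (N + 1)"
      by (rule mult_left_mono) simp_all
    also have "\<dots> < \<delta>"
      using t N by (simp add: pos_less_divide_eq)
    finally have "\<bar>F (\<lambda>x. \<xi> x + t *\<^sub>R h x) - F \<xi> - t * l2_inner \<mu> g h\<bar> \<le> \<epsilon> / (N + 1) * (\<bar>t\<bar> * N)"
      using \<delta>[rule_format, of "\<lambda>x. t *\<^sub>R h x"] L2_scaleR[OF h, of t] norm_th by simp
    also have "\<dots> \<le> \<epsilon> / (N + 1) * (\<bar>t\<bar> * (N + 1))"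
      using \<open>\<epsilon> > 0\<close> N by (intro mult_left_mono) simp_all
    also have "\<dots> = \<epsilon> * \<bar>t\<bar>"
      using N by (simp add: field_simps)
    finally show ?thesis .
  qed
  then show ?thesis
    using \<open>\<delta> > 0\<close> N by (intro exI[of _ "\<delta> / (N + 1)"]) auto
qed

lemma has_L2_gradient_imp_directional_derivative:
  assumes grad: "has_L2_gradient F \<mu> \<xi> g" and h: "h \<in> L2 \<mu>"
  shows "((\<lambda>t. F (\<lambda>x. \<xi> x + t *\<^sub>R h x)) has_real_derivative l2_inner \<mu> g h) (at 0)"
proof -
  have "\<exists>s>0. \<forall>t. t \<noteq> 0 \<and> \<bar>t\<bar> < s \<longrightarrow>
      \<bar>(F (\<lambda>x. \<xi> x + t *\<^sub>R h x) - F \<xi>) / t - l2_inner \<mu> g h\<bar> < r" if "r > 0" for r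
  proof -
    obtain s where "s > 0" and s: "\<forall>t. \<bar>t\<bar> < s \<longrightarrow>
        \<bar>F (\<lambda>x. \<xi> x + t *\<^sub>R h x) - F \<xi> - t * l2_inner \<mu> g h\<bar> \<le> r / 2 * \<bar>t\<bar>"
      using has_L2_gradient_along_line[OF grad h, of "r / 2"] \<open>r > 0\<close> by auto
    have "\<bar>(F (\<lambda>x. \<xi> x + t *\<^sub>R h x) - F \<xi>) / t - l2_inner \<mu> g h\<bar> < r"
      if "t \<noteq> 0" "\<bar>t\<bar> < s" for t
    proof -
      have "(F (\<lambda>x. \<xi> x + t *\<^sub>R h x) - F \<xi>) / t - l2_inner \<mu> g h
          = (F (\<lambda>x. \<xi> x + t *\<^sub>R h x) - F \<xi> - t * l2_inner \<mu> g h) / t"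
        using \<open>t \<noteq> 0\<close> by (simp add: field_simps)
      moreover have "\<bar>F (\<lambda>x. \<xi> x + t *\<^sub>R h x) - F \<xi> - t * l2_inner \<mu> g h\<bar> / \<bar>t\<bar> \<le> r / 2"
        using s \<open>\<bar>t\<bar> < s\<close> \<open>t \<noteq> 0\<close> by (simp add: pos_divide_le_eq)
      ultimately show ?thesis
        using \<open>r > 0\<close> by (simp only: abs_divide)
    qed
    then show ?thesis
      using \<open>s > 0\<close> by blast
  qed
  then show ?thesis
    by (simp add: has_field_derivative_iff LIM_eq)
qed

lemma L2_lambda_convex_gradient_inequality:
  assumes conv: "L2_lambda_convex lam F \<mu>" and grad: "has_L2_gradient F \<mu> \<xi> g"
    and \<xi>: "\<xi> \<in> L2 \<mu>" and \<eta>: "\<eta> \<in> L2 \<mu>"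
  shows "l2_inner \<mu> g (\<lambda>x. \<eta> x - \<xi> x) \<le> F \<eta> - F \<xi> - lam / 2 * (l2_norm \<mu> (\<lambda>x. \<eta> x - \<xi> x))\<^sup>2"
proof -
  define h where "h = (\<lambda>x. \<eta> x - \<xi> x)"
  define M where "M = (l2_norm \<mu> h)\<^sup>2"
  define q where "q t = (F (\<lambda>x. \<xi> x + t *\<^sub>R h x) - F \<xi>) / t" for t
  have q_limit: "((\<lambda>t. (F (\<lambda>x. \<xi> x + t *\<^sub>R h x) - F \<xi>) / (t - 0)) \<longlongrightarrow> l2_inner \<mu> g h) (at 0)"
    using has_L2_gradient_imp_directional_derivative[OF grad L2_diff[OF \<eta> \<xi>]]
    unfolding h_def has_field_derivative_iff by simp
  have "((\<lambda>t. F \<eta> - F \<xi> - lam / 2 * (1 - t) * M) \<longlongrightarrow> F \<eta> - F \<xi> - lam / 2 * M) (at_right 0)"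
    by (auto intro!: tendsto_eq_intros)
  moreover have "(q \<longlongrightarrow> l2_inner \<mu> g h) (at_right 0)"
    using q_limit unfolding q_def by (auto intro: tendsto_mono at_le)
  moreover have "\<forall>\<^sub>F t in at_right 0. q t \<le> F \<eta> - F \<xi> - lam / 2 * (1 - t) * M"
    using eventually_at_right_real[OF zero_less_one]
  proof (rule eventually_mono)
    fix t :: real assume t: "t \<in> {0<..<1}"
    have "F (\<lambda>x. (1 - t) *\<^sub>R \<xi> x + t *\<^sub>R \<eta> x)
        \<le> (1 - t) * F \<xi> + t * F \<eta> - lam / 2 * t * (1 - t) * (l2_norm \<mu> (\<lambda>x. \<xi> x - \<eta> x))\<^sup>2"
      using conv \<xi> \<eta> t unfolding L2_lambda_convex_def by simp
    moreover have "(\<lambda>x. (1 - t) *\<^sub>R \<xi> x + t *\<^sub>R \<eta> x) = (\<lambda>x. \<xi> x + t *\<^sub>R h x)"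
      unfolding h_def by (simp add: algebra_simps)
    moreover have "(l2_norm \<mu> (\<lambda>x. \<xi> x - \<eta> x))\<^sup>2 = M"
      unfolding M_def h_def by (rule arg_cong[OF l2_norm_minus_commute])
    ultimately have "F (\<lambda>x. \<xi> x + t *\<^sub>R h x) - F \<xi> \<le> t * (F \<eta> - F \<xi> - lam / 2 * (1 - t) * M)"
      by (simp add: algebra_simps)
    then show "q t \<le> F \<eta> - F \<xi> - lam / 2 * (1 - t) * M"
      using t unfolding q_def by (simp add: pos_divide_le_eq mult.commute)
  qed
  ultimately show ?thesis
    unfolding h_def M_def by (rule tendsto_le[OF trivial_limit_at_right_real])
qed

lemma L2_lambda_convex_gradient_monotone:
  assumes conv: "L2_lambda_convex lam F \<mu>"
    and g: "has_L2_gradient F \<mu> \<xi> g" and k: "has_L2_gradient F \<mu> \<eta> k"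
    and \<xi>: "\<xi> \<in> L2 \<mu>" and \<eta>: "\<eta> \<in> L2 \<mu>"
  shows "lam * (l2_norm \<mu> (\<lambda>x. \<xi> x - \<eta> x))\<^sup>2 \<le> l2_inner \<mu> (\<lambda>x. g x - k x) (\<lambda>x. \<xi> x - \<eta> x)"
proof -
  have gL: "g \<in> L2 \<mu>" and kL: "k \<in> L2 \<mu>"
    using g k by (simp_all add: has_L2_gradient_in_L2)
  have "l2_inner \<mu> g (\<lambda>x. \<eta> x - \<xi> x) \<le> F \<eta> - F \<xi> - lam / 2 * (l2_norm \<mu> (\<lambda>x. \<xi> x - \<eta> x))\<^sup>2"
    using L2_lambda_convex_gradient_inequality[OF conv g \<xi> \<eta>] l2_norm_minus_commute[of \<mu> \<xi> \<eta>] by simp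
  moreover have "l2_inner \<mu> k (\<lambda>x. \<xi> x - \<eta> x) \<le> F \<xi> - F \<eta> - lam / 2 * (l2_norm \<mu> (\<lambda>x. \<xi> x - \<eta> x))\<^sup>2"
    by (rule L2_lambda_convex_gradient_inequality[OF conv k \<eta> \<xi>])
  moreover have "l2_inner \<mu> g (\<lambda>x. \<eta> x - \<xi> x) = - l2_inner \<mu> g (\<lambda>x. \<xi> x - \<eta> x)"
    using gL \<xi> \<eta> by (simp add: l2_inner_diff_right)
  moreover have "l2_inner \<mu> (\<lambda>x. g x - k x) (\<lambda>x. \<xi> x - \<eta> x)
      = l2_inner \<mu> g (\<lambda>x. \<xi> x - \<eta> x) - l2_inner \<mu> k (\<lambda>x. \<xi> x - \<eta> x)"
    by (rule l2_inner_diff_left[OF gL kL L2_diff[OF \<xi> \<eta>]])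
  ultimately show ?thesis
    by linarith
qed

lemma Phi_minimizer_Euler_Lagrange:
  fixes \<phi> :: "'a::euclidean_space measure \<Rightarrow> real"
  assumes grad: "has_L2_gradient (lift \<phi> \<mu>) \<mu> \<xi> a"
    and \<xi>: "\<xi> \<in> L2 \<mu>" and v: "v \<in> L2 \<mu>" and h: "h \<in> L2 \<mu>"
    and grad_v: "L2_grad (lift \<phi> \<mu>) \<mu> v \<in> L2 \<mu>" and "\<tau> \<noteq> 0"
    and minimal: "\<forall>\<eta>\<in>L2 \<mu>. Phi \<phi> \<tau> \<mu> v \<xi> \<le> Phi \<phi> \<tau> \<mu> v \<eta>"
  shows "l2_inner \<mu> (\<lambda>x. \<xi> x - v x) h
    = - \<tau> / 2 * l2_inner \<mu> (\<lambda>x. a x + L2_grad (lift \<phi> \<mu>) \<mu> v x) h"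
proof -
  define F where "F = lift \<phi> \<mu>"
  define b where "b = L2_grad F \<mu> v"
  define d where "d = (\<lambda>x. \<xi> x - v x)"
  have bL: "b \<in> L2 \<mu>" and dL: "d \<in> L2 \<mu>" and aL: "a \<in> L2 \<mu>" and th: "(\<lambda>x. t *\<^sub>R h x) \<in> L2 \<mu>" for t
    using grad_v L2_diff[OF \<xi> v] has_L2_gradient_in_L2[OF grad] L2_scaleR[OF h]
    unfolding b_def d_def F_def by simp_all
  have Phi_line: "Phi \<phi> \<tau> \<mu> v (\<lambda>x. \<xi> x + t *\<^sub>R h x)
      = 1/2 * (F (\<lambda>x. \<xi> x + t *\<^sub>R h x) + l2_inner \<mu> b \<xi> + t * l2_inner \<mu> b h)
        + 1 / (2 * \<tau>) * (l2_inner \<mu> d d + 2 * t * l2_inner \<mu> d h + t\<^sup>2 * l2_inner \<mu> h h)" for t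
  proof -
    have "(\<lambda>x. \<xi> x + t *\<^sub>R h x - v x) = (\<lambda>x. d x + t *\<^sub>R h x)"
      unfolding d_def by (simp add: algebra_simps)
    then have "(l2_norm \<mu> (\<lambda>x. \<xi> x + t *\<^sub>R h x - v x))\<^sup>2
        = l2_inner \<mu> (\<lambda>x. d x + t *\<^sub>R h x) (\<lambda>x. d x + t *\<^sub>R h x)"
      by (simp add: l2_norm_power2)
    also have "\<dots> = l2_inner \<mu> d d + 2 * t * l2_inner \<mu> d h + t\<^sup>2 * l2_inner \<mu> h h"
      using dL h th L2_add[OF dL th]
      by (simp add: l2_inner_add_left l2_inner_add_right l2_inner_commute[of \<mu> h d] power2_eq_square algebra_simps)
    finally show ?thesis
      using bL \<xi> th unfolding Phi_def F_def b_def by (simp add: l2_inner_add_right)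
  qed
  have deriv: "((\<lambda>t. Phi \<phi> \<tau> \<mu> v (\<lambda>x. \<xi> x + t *\<^sub>R h x)) has_real_derivative
      1/2 * (l2_inner \<mu> a h + l2_inner \<mu> b h) + 1 / \<tau> * l2_inner \<mu> d h) (at 0)"
    unfolding Phi_line using grad[folded F_def] h \<open>\<tau> \<noteq> 0\<close>
    by (auto intro!: derivative_eq_intros has_L2_gradient_imp_directional_derivative)
  have local_min: "\<forall>s. \<bar>0 - s\<bar> < 1 \<longrightarrow>
      Phi \<phi> \<tau> \<mu> v (\<lambda>x. \<xi> x + 0 *\<^sub>R h x) \<le> Phi \<phi> \<tau> \<mu> v (\<lambda>x. \<xi> x + s *\<^sub>R h x)"
    using minimal L2_add[OF \<xi> th] by simp
  have "1/2 * (l2_inner \<mu> a h + l2_inner \<mu> b h) + 1 / \<tau> * l2_inner \<mu> d h = 0"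
    by (rule DERIV_local_min[OF deriv zero_less_one local_min])
  then show ?thesis
    using \<open>\<tau> \<noteq> 0\<close> aL bL h unfolding d_def b_def F_def by (simp add: l2_inner_add_left field_simps)
qed

lemma trapezoidal_step_gradient_estimate:
  assumes a: "a \<in> L2 \<mu>" and b: "b \<in> L2 \<mu>" and d: "d \<in> L2 \<mu>" and "\<tau> > 0"
    and step: "\<And>h. h \<in> L2 \<mu> \<Longrightarrow> l2_inner \<mu> d h = - \<tau> / 2 * l2_inner \<mu> (\<lambda>x. a x + b x) h"
    and mono: "lam * (l2_norm \<mu> d)\<^sup>2 \<le> l2_inner \<mu> (\<lambda>x. a x - b x) d"
  shows "lam * \<tau> / 2 * (l2_norm \<mu> (\<lambda>x. a x + b x))\<^sup>2 \<le> (l2_norm \<mu> b)\<^sup>2 - (l2_norm \<mu> a)\<^sup>2"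
proof -
  define s where "s = (\<lambda>x. a x + b x)"
  have s: "s \<in> L2 \<mu>"
    unfolding s_def using a b by (rule L2_add)
  have step_s: "l2_inner \<mu> d h = - \<tau> / 2 * l2_inner \<mu> s h" if "h \<in> L2 \<mu>" for h
    unfolding s_def using step[OF that] .
  have "l2_inner \<mu> (\<lambda>x. a x - b x) d = - \<tau> / 2 * l2_inner \<mu> s (\<lambda>x. a x - b x)"
    using step_s[OF L2_diff[OF a b]] by (simp add: l2_inner_commute)
  also have "l2_inner \<mu> s (\<lambda>x. a x - b x) = l2_inner \<mu> a a - l2_inner \<mu> b b"
    unfolding s_def using a b L2_diff[OF a b]
    by (simp add: l2_inner_add_left l2_inner_diff_right l2_inner_commute[of \<mu> b a])
  finally have inner_eq: "l2_inner \<mu> (\<lambda>x. a x - b x) d = \<tau> / 2 * ((l2_norm \<mu> b)\<^sup>2 - (l2_norm \<mu> a)\<^sup>2)"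
    by (simp add: l2_norm_power2 algebra_simps)
  have "(l2_norm \<mu> d)\<^sup>2 = - \<tau> / 2 * l2_inner \<mu> s d"
    using step_s[OF d] by (simp add: l2_norm_power2)
  also have "l2_inner \<mu> s d = - \<tau> / 2 * l2_inner \<mu> s s"
    using step_s[OF s] by (simp add: l2_inner_commute)
  finally have norm_eq: "(l2_norm \<mu> d)\<^sup>2 = (\<tau> / 2)\<^sup>2 * (l2_norm \<mu> s)\<^sup>2"
    by (simp only: l2_norm_power2) (simp add: power2_eq_square)
  have "\<tau> / 2 * (lam * \<tau> / 2 * (l2_norm \<mu> s)\<^sup>2) = lam * (l2_norm \<mu> d)\<^sup>2"
    unfolding norm_eq power2_eq_square[of "\<tau> / 2"] by (simp add: algebra_simps)
  with mono inner_eq have "\<tau> / 2 * (lam * \<tau> / 2 * (l2_norm \<mu> s)\<^sup>2) \<le> \<tau> / 2 * ((l2_norm \<mu> b)\<^sup>2 - (l2_norm \<mu> a)\<^sup>2)"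
    by linarith
  then show ?thesis
    unfolding s_def using \<open>\<tau> > 0\<close> by (simp add: mult.assoc mult.left_commute)
qed

lemma C_const_neg:
  assumes "lam < 0" and "\<bar>lam\<bar> * \<tau> < 1" and "\<tau> > 0"
  shows "C_const lam \<tau> = (1 - lam * \<tau>) / (1 + lam * \<tau>)"
proof -
  define q where "q = (1 + lam * \<tau>) / (1 - lam * \<tau>)"
  have "lam * \<tau> < 0" and "- lam * \<tau> < 1"
    using assms by (simp_all add: mult_neg_pos)
  then have "0 < q" and "q < 1"
    unfolding q_def by (simp_all add: divide_less_eq)
  then have "2 * \<bar>lambda_tau lam \<tau>\<bar> * \<tau> = - ln q"
    unfolding lambda_tau_def q_def[symmetric] using \<open>\<tau> > 0\<close> by (simp add: abs_mult abs_of_neg)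
  then show ?thesis
    unfolding C_const_def using \<open>lam < 0\<close> \<open>0 < q\<close> by (simp add: exp_minus q_def)
qed

lemma le_C_const_mult:
  assumes "\<tau> > 0" and "lam < 0 \<longrightarrow> \<bar>lam\<bar> * \<tau> < 1"
    and "lam * \<tau> / 2 * S \<le> B - A" and "0 \<le> S" and "S \<le> 2 * (A + B)"
  shows "A \<le> C_const lam \<tau> * B"
proof (cases "lam \<ge> 0")
  case True
  then have "0 \<le> lam * \<tau> / 2 * S"
    using assms by simp
  then have "A \<le> B"
    using assms by linarith
  then show ?thesis
    using True by (simp add: C_const_def)
next
  case False
  then have "lam * \<tau> / 2 * (2 * (A + B)) \<le> lam * \<tau> / 2 * S"
    using assms by (intro mult_left_mono_neg) (simp_all add: mult_nonpos_nonneg)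
  then have "A * (1 + lam * \<tau>) \<le> B * (1 - lam * \<tau>)"
    using assms by (simp add: algebra_simps)
  moreover have "0 < 1 + lam * \<tau>"
    using assms False by simp
  ultimately show ?thesis
    using assms False by (simp add: C_const_neg le_divide_eq mult.commute)
qed

theorem mainTheorem5:
  fixes \<phi> :: "'a::euclidean_space measure \<Rightarrow> real"
    and \<mu> :: "'a measure" and lam \<tau> :: real and v \<xi>s :: "'a \<Rightarrow> 'a"
  assumes "P2 \<mu>"
    and "L2_frechet_differentiable (lift \<phi> \<mu>) \<mu>"
    and "L2_lambda_convex lam (lift \<phi> \<mu>) \<mu>"
    and "L2_bounded_below (lift \<phi> \<mu>) \<mu>"
    and "\<tau> > 0" and "lam / 2 + 1 / \<tau> > 0"
    and "v \<in> L2 \<mu>"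
    and "lam < 0 \<longrightarrow> \<bar>lam\<bar> * \<tau> < 1"
    and "\<xi>s \<in> L2 \<mu>"
    and "\<forall>\<xi>\<in>L2 \<mu>. Phi \<phi> \<tau> \<mu> v \<xi>s \<le> Phi \<phi> \<tau> \<mu> v \<xi>"
  shows "(l2_norm \<mu> (L2_grad (lift \<phi> \<mu>) \<mu> \<xi>s))\<^sup>2
           \<le> C_const lam \<tau> * (l2_norm \<mu> (L2_grad (lift \<phi> \<mu>) \<mu> v))\<^sup>2"
proof -
  (* P2, boundedness below and lam / 2 + 1 / tau > 0 only serve the existence of the
     minimiser, which is given here. *)
  note diff = assms(2) and conv = assms(3) and \<tau> = assms(5) and v = assms(7)
    and \<xi>s = assms(9) and minimal = assms(10)
  define a where "a = L2_grad (lift \<phi> \<mu>) \<mu> \<xi>s"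
  define b where "b = L2_grad (lift \<phi> \<mu>) \<mu> v"
  have grad_a: "has_L2_gradient (lift \<phi> \<mu>) \<mu> \<xi>s a" and grad_b: "has_L2_gradient (lift \<phi> \<mu>) \<mu> v b"
    unfolding a_def b_def using has_L2_gradient_L2_grad[OF diff] \<xi>s v by simp_all
  have a: "a \<in> L2 \<mu>" and b: "b \<in> L2 \<mu>"
    using grad_a grad_b by (simp_all add: has_L2_gradient_in_L2)
  have "lam * \<tau> / 2 * (l2_norm \<mu> (\<lambda>x. a x + b x))\<^sup>2 \<le> (l2_norm \<mu> b)\<^sup>2 - (l2_norm \<mu> a)\<^sup>2"
  proof (rule trapezoidal_step_gradient_estimate[OF a b L2_diff[OF \<xi>s v] \<tau>])
    show "l2_inner \<mu> (\<lambda>x. \<xi>s x - v x) h = - \<tau> / 2 * l2_inner \<mu> (\<lambda>x. a x + b x) h"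
      if "h \<in> L2 \<mu>" for h
      using Phi_minimizer_Euler_Lagrange[OF grad_a \<xi>s v that] b \<tau> minimal unfolding b_def by simp
    show "lam * (l2_norm \<mu> (\<lambda>x. \<xi>s x - v x))\<^sup>2 \<le> l2_inner \<mu> (\<lambda>x. a x - b x) (\<lambda>x. \<xi>s x - v x)"
      by (rule L2_lambda_convex_gradient_monotone[OF conv grad_a grad_b \<xi>s v])
  qed
  then show ?thesis
    using le_C_const_mult[OF \<tau> assms(8)] l2_norm_add_power2_le[OF a b] unfolding a_def b_def
    by (simp add: zero_le_power2)
qed

end
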